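(* If $\mathbf{C}$ is a propositional Hilbert-type calculus whose set of theorems $\mathrm{Thm}(\mathbf{C})$ is undecidable, then $\mathbf{C}$ is not effectively approximable.
   Context: A propositional language has variables $X_1,X_2,\ldots$ and finitely many connectives with arities. A substitution $\sigma$ maps variables to formulas; $F\sigma$ denotes simultaneous replacement. A propositional Hilbert-type calculus $\mathbf{C}$ is given by a finite set of axioms and a finite set of rules (premises $A_1,\ldots,A_n$, conclusion $C$). A derivation is a finite sequence of formulas each of which is a substitution instance of an axiom or is $C\sigma$ for some rule and substitution $\sigma$ with all $A_j\sigma$ occurring earlier; $\mathrm{Thm}(\mathbf{C})$ is the set of derivable formulas. A finite-valued logic $\mathbf{M}$ is given by a finite set $V(\mathbf{M})$ of truth values, designated values $V^+(\mathbf{M})$, and a truth function for each connective; valuations map variables to truth values and extend to formulas; a valuation satisfies $F$ if $F$ is designated; a tautology is a formula satisfied by every valuation; $\mathrm{Taut}(\mathbf{M})$ is the set of tautologies; $\mathbf{M}_1\unlhd\mathbf{M}_2$ means $\mathrm{Taut}(\mathbf{M}_1)\subseteq\mathrm{Taut}(\mathbf{M}_2)$. $\mathbf{M}$ is a cover for $\mathbf{C}$ if all axioms of $\mathbf{C}$ are tautologies of $\mathbf{M}$ and for every rule every valuation satisfying all premises satisfies the conclusion. $\mathbf{C}$ is effectively approximable if there is an effectively enumerated sequence $\langle\mathbf{M}_1,\mathbf{M}_2,\ldots\rangle$ of covers of $\mathbf{C}$ such that $\mathbf{M}_i\unlhd\mathbf{M}_j$ whenever $i\ge j$ and $\mathrm{Thm}(\mathbf{C})=\bigcap_j\mathrm{Taut}(\mathbf{M}_j)$.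 *)

theory Defs
  imports Main "HOL-Library.Nat_Bijection"
begin

text \<open>A language is given by a list of arities: connective number c (for c < length ar)
has arity ar ! c. Variables X_1, X_2, ... are represented as Var n.\<close>

datatype form = Var nat | App nat "form list"

fun wf_form :: "nat list \<Rightarrow> form \<Rightarrow> bool" where
  "wf_form ar (Var n) = True"
| "wf_form ar (App c args) =
     (c < length ar \<and> length args = ar ! c \<and> (\<forall>a\<in>set args. wf_form ar a))"

fun subst :: "(nat \<Rightarrow> form) \<Rightarrow> form \<Rightarrow> form" where
  "subst \<sigma> (Var n) = \<sigma> n"
| "subst \<sigma> (App c args) = App c (map (subst \<sigma>) args)"

definition wf_subst :: "nat list \<Rightarrow> (nat \<Rightarrow> form) \<Rightarrow> bool" where
  "wf_subst ar \<sigma> \<longleftrightarrow> (\<forall>n. wf_form ar (\<sigma> n))"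

record calc =
  axioms :: "form list"
  rules :: "(form list \<times> form) list"

definition calculus :: "nat list \<Rightarrow> calc \<Rightarrow> bool" where
  "calculus ar C \<longleftrightarrow> (\<forall>A\<in>set (axioms C). wf_form ar A) \<and>
     (\<forall>(ps, c)\<in>set (rules C). wf_form ar c \<and> (\<forall>p\<in>set ps. wf_form ar p))"

definition derivation :: "nat list \<Rightarrow> calc \<Rightarrow> form list \<Rightarrow> bool" where
  "derivation ar C ds \<longleftrightarrow> (\<forall>i < length ds.
     (\<exists>A\<in>set (axioms C). \<exists>\<sigma>. wf_subst ar \<sigma> \<and> ds ! i = subst \<sigma> A) \<or>
     (\<exists>(ps, c)\<in>set (rules C). \<exists>\<sigma>. wf_subst ar \<sigma> \<and> ds ! i = subst \<sigma> c \<and>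
         (\<forall>p\<in>set ps. subst \<sigma> p \<in> set (take i ds))))"

definition Thm :: "nat list \<Rightarrow> calc \<Rightarrow> form set" where
  "Thm ar C = {F. \<exists>ds. derivation ar C ds \<and> F \<in> set ds}"

record matrix =
  nv :: nat
  des :: "nat set"
  tf :: "nat \<Rightarrow> nat list \<Rightarrow> nat"

definition is_logic :: "nat list \<Rightarrow> matrix \<Rightarrow> bool" where
  "is_logic ar M \<longleftrightarrow> 1 \<le> nv M \<and> des M \<subseteq> {..<nv M} \<and>
     (\<forall>c xs. c < length ar \<and> length xs = ar ! c \<and> set xs \<subseteq> {..<nv M} \<longrightarrow> tf M c xs < nv M)"

fun eval :: "matrix \<Rightarrow> (nat \<Rightarrow> nat) \<Rightarrow> form \<Rightarrow> nat" where
  "eval M v (Var n) = v n"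
| "eval M v (App c args) = tf M c (map (eval M v) args)"

definition valuation :: "matrix \<Rightarrow> (nat \<Rightarrow> nat) \<Rightarrow> bool" where
  "valuation M v \<longleftrightarrow> (\<forall>n. v n < nv M)"

definition satisfies :: "matrix \<Rightarrow> (nat \<Rightarrow> nat) \<Rightarrow> form \<Rightarrow> bool" where
  "satisfies M v F \<longleftrightarrow> eval M v F \<in> des M"

definition Taut :: "nat list \<Rightarrow> matrix \<Rightarrow> form set" where
  "Taut ar M = {F. wf_form ar F \<and> (\<forall>v. valuation M v \<longrightarrow> satisfies M v F)}"

definition cover :: "nat list \<Rightarrow> calc \<Rightarrow> matrix \<Rightarrow> bool" where
  "cover ar C M \<longleftrightarrow> is_logic ar M \<and>
     (\<forall>A\<in>set (axioms C). A \<in> Taut ar M) \<and>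
     (\<forall>(ps, c)\<in>set (rules C). \<forall>v. valuation M v \<longrightarrow>
         (\<forall>p\<in>set ps. satisfies M v p) \<longrightarrow> satisfies M v c)"

datatype recf = Zr | Sc | Id nat | Cn recf "recf list" | Pr recf recf | Mn recf

inductive rec_eval :: "recf \<Rightarrow> nat list \<Rightarrow> nat \<Rightarrow> bool" where
  zero: "rec_eval Zr xs 0"
| succ: "rec_eval Sc (x # xs) (Suc x)"
| proj: "i < length xs \<Longrightarrow> rec_eval (Id i) xs (xs ! i)"
| comp: "length ys = length gs \<Longrightarrow> (\<forall>i < length gs. rec_eval (gs ! i) xs (ys ! i)) \<Longrightarrow>
         rec_eval f ys y \<Longrightarrow> rec_eval (Cn f gs) xs y"
| prim0: "rec_eval f xs y \<Longrightarrow> rec_eval (Pr f g) (0 # xs) y"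
| primS: "rec_eval (Pr f g) (n # xs) y \<Longrightarrow> rec_eval g (n # y # xs) z \<Longrightarrow>
         rec_eval (Pr f g) (Suc n # xs) z"
| mini: "rec_eval f (n # xs) 0 \<Longrightarrow> (\<forall>m < n. \<exists>k. rec_eval f (m # xs) (Suc k)) \<Longrightarrow>
         rec_eval (Mn f) xs n"

definition decidable :: "nat set \<Rightarrow> bool" where
  "decidable A \<longleftrightarrow> (\<exists>r. \<forall>x. rec_eval r [x] (if x \<in> A then 1 else 0))"

fun form_enc :: "form \<Rightarrow> nat" where
  "form_enc (Var n) = prod_encode (0, n)"
| "form_enc (App c args) = prod_encode (Suc c, list_encode (map form_enc args))"

definition effective_seq :: "nat list \<Rightarrow> (nat \<Rightarrow> matrix) \<Rightarrow> bool" where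
  "effective_seq ar M \<longleftrightarrow>
     (\<exists>r. \<forall>i. rec_eval r [i] (nv (M i))) \<and>
     (\<exists>r. \<forall>i x. x < nv (M i) \<longrightarrow> rec_eval r [i, x] (if x \<in> des (M i) then 1 else 0)) \<and>
     (\<exists>r. \<forall>i c xs. c < length ar \<and> length xs = ar ! c \<and> set xs \<subseteq> {..<nv (M i)} \<longrightarrow>
          rec_eval r [i, c, list_encode xs] (tf (M i) c xs))"

definition effectively_approximable :: "nat list \<Rightarrow> calc \<Rightarrow> bool" where
  "effectively_approximable ar C \<longleftrightarrow> (\<exists>M :: nat \<Rightarrow> matrix.
     effective_seq ar M \<and> (\<forall>j. cover ar C (M j)) \<and>
     (\<forall>i j. j \<le> i \<longrightarrow> Taut ar (M i) \<subseteq> Taut ar (M j)) \<and>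
     Thm ar C = (\<Inter>j. Taut ar (M j)))"

end

(*
  If Thm(C) is the intersection of the tautologies of a uniformly computable sequence of
  finite matrices M_j, then both Thm(C) and its complement are recursively enumerable.
  A theorem is certified by a coded derivation.  A non-theorem F is certified by an index j
  together with values for the finitely many variables of F under which M_j does not designate
  F; checking this only needs the truth tables and designated values of M_j, which are
  computable uniformly in j.  By Post's theorem a set that is recursively enumerable together
  with its complement is decidable, so Thm(C) would be decidable.
*)

theory Submission
  imports Defs
begin

section \<open>Computable functions\<close>

definition computable :: "nat \<Rightarrow> (nat list \<Rightarrow> nat) \<Rightarrow> bool" where
  "computable n f \<longleftrightarrow> (\<exists>r. \<forall>xs. length xs = n \<longrightarrow> rec_eval r xs (f xs))"

lemma computable_proj: "i < n \<Longrightarrow> computable n (\<lambda>xs. xs ! i)"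
  unfolding computable_def by (auto intro!: exI[of _ "Id i"] rec_eval.proj)

lemma computable_zero: "computable n (\<lambda>xs. 0)"
  unfolding computable_def by (auto intro!: exI[of _ Zr] rec_eval.zero)

lemma computable_comp:
  assumes "computable m f" "length gs = m" "\<forall>g\<in>set gs. computable n g"
  shows "computable n (\<lambda>xs. f (map (\<lambda>g. g xs) gs))"
proof -
  obtain rf where rf: "\<forall>xs. length xs = m \<longrightarrow> rec_eval rf xs (f xs)"
    using assms(1) unfolding computable_def by blast
  obtain R where R: "\<forall>g\<in>set gs. \<forall>xs. length xs = n \<longrightarrow> rec_eval (R g) xs (g xs)"
    using assms(3) unfolding computable_def by metis
  have "rec_eval (Cn rf (map R gs)) xs (f (map (\<lambda>g. g xs) gs))" if "length xs = n" for xs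
    by (rule rec_eval.comp[where ys = "map (\<lambda>g. g xs) gs"]) (use R rf assms(2) that in auto)
  then show ?thesis
    unfolding computable_def by blast
qed

lemma computable_compose1:
  "computable 1 (\<lambda>xs. h (xs ! 0)) \<Longrightarrow> computable n f \<Longrightarrow> computable n (\<lambda>xs. h (f xs))"
  using computable_comp[of 1 "\<lambda>xs. h (xs ! 0)" "[f]" n] by simp

lemma computable_compose2:
  "computable 2 (\<lambda>xs. h (xs ! 0) (xs ! 1)) \<Longrightarrow> computable n f \<Longrightarrow> computable n g \<Longrightarrow>
   computable n (\<lambda>xs. h (f xs) (g xs))"
  using computable_comp[of 2 "\<lambda>xs. h (xs ! 0) (xs ! 1)" "[f, g]" n] by (simp add: numeral_2_eq_2)

lemma computable_prim_rec:
  assumes m: "m = Suc n" and f: "computable n f" and g: "computable (Suc m) g"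
    and h: "\<And>xs. length xs = m \<Longrightarrow>
      h xs = rec_nat (f (tl xs)) (\<lambda>k acc. g (k # acc # tl xs)) (hd xs)"
  shows "computable m h"
proof -
  obtain rf where rf: "\<forall>xs. length xs = n \<longrightarrow> rec_eval rf xs (f xs)"
    using f unfolding computable_def by blast
  obtain rg where rg: "\<forall>xs. length xs = Suc (Suc n) \<longrightarrow> rec_eval rg xs (g xs)"
    using g m unfolding computable_def by blast
  have pr: "rec_eval (Pr rf rg) (k # ys) (rec_nat (f ys) (\<lambda>k acc. g (k # acc # ys)) k)"
    if "length ys = n" for k ys
  proof (induction k)
    case 0
    then show ?case using rf that by (auto intro: rec_eval.prim0)
  next
    case (Suc k)
    then show ?case using rg that by (auto intro: rec_eval.primS)
  qed
  show ?thesis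
    unfolding computable_def
  proof (intro exI allI impI)
    fix xs :: "nat list"
    assume len: "length xs = m"
    then obtain k ys where "xs = k # ys" "length ys = n"
      using m by (auto simp: length_Suc_conv)
    then show "rec_eval (Pr rf rg) xs (h xs)"
      using pr h[OF len] by simp
  qed
qed

lemma computable_Least:
  assumes f: "computable (Suc n) f" and ex: "\<And>xs. length xs = n \<Longrightarrow> \<exists>y. f (y # xs) = 0"
  shows "computable n (\<lambda>xs. LEAST y. f (y # xs) = 0)"
proof -
  obtain rf where rf: "\<forall>xs. length xs = Suc n \<longrightarrow> rec_eval rf xs (f xs)"
    using f unfolding computable_def by blast
  have "rec_eval (Mn rf) xs (LEAST y. f (y # xs) = 0)" if len: "length xs = n" for xs
  proof (rule rec_eval.mini)
    have "f ((LEAST y. f (y # xs) = 0) # xs) = 0"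
      using LeastI_ex[OF ex[OF len]] .
    then show "rec_eval rf ((LEAST y. f (y # xs) = 0) # xs) 0"
      using rf len by (metis length_Cons)
    show "\<forall>m < (LEAST y. f (y # xs) = 0). \<exists>k. rec_eval rf (m # xs) (Suc k)"
    proof (intro allI impI)
      fix m
      assume "m < (LEAST y. f (y # xs) = 0)"
      then obtain k where "f (m # xs) = Suc k"
        using not_less_Least not0_implies_Suc by blast
      then show "\<exists>k. rec_eval rf (m # xs) (Suc k)"
        using rf len by (metis length_Cons)
    qed
  qed
  then show ?thesis
    unfolding computable_def by blast
qed

lemma computable_Suc:
  assumes "computable n f"
  shows "computable n (\<lambda>xs. Suc (f xs))"
proof -
  have prim: "computable 1 (\<lambda>xs. Suc (xs ! 0))"
    unfolding computable_def by (auto intro!: exI[of _ Sc] rec_eval.succ simp: length_Suc_conv)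
  show ?thesis
    by (rule computable_compose1[OF prim]) (rule assms)+
qed

lemma computable_const: "computable n (\<lambda>xs. k)"
  by (induction k) (auto intro: computable_zero computable_Suc)

lemma computable_add:
  assumes "computable n f" "computable n g"
  shows "computable n (\<lambda>xs. f xs + g xs)"
proof -
  have prim: "computable 2 (\<lambda>xs. xs ! 0 + xs ! 1)"
  proof (rule computable_prim_rec[of 2 1 "\<lambda>xs. xs ! 0" "\<lambda>xs. Suc (xs ! 1)"])
    have "rec_nat a (\<lambda>k acc. Suc acc) n = n + a" for a n :: nat
      by (induction n) auto
    then show "xs ! 0 + xs ! 1 = rec_nat (tl xs ! 0) (\<lambda>k acc. Suc ((k # acc # tl xs) ! 1)) (hd xs)"
      if "length xs = 2" for xs
      using that by (auto simp: length_Suc_conv numeral_2_eq_2)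
  qed (rule computable_proj computable_Suc | simp)+
  show ?thesis
    by (rule computable_compose2[OF prim]) (rule assms)+
qed

lemma computable_pred:
  assumes "computable n f"
  shows "computable n (\<lambda>xs. f xs - 1)"
proof -
  have prim: "computable 1 (\<lambda>xs. xs ! 0 - 1)"
  proof (rule computable_prim_rec[of 1 0 "\<lambda>xs. 0" "\<lambda>xs. xs ! 0"])
    show "xs ! 0 - 1 = rec_nat 0 (\<lambda>k acc. (k # acc # tl xs) ! 0) (hd xs)"
      if "length xs = 1" for xs
      using that by (cases "hd xs") (auto simp: length_Suc_conv)
  qed (rule computable_proj computable_zero | simp)+
  show ?thesis
    by (rule computable_compose1[OF prim]) (rule assms)+
qed

lemma computable_diff:
  assumes "computable n f" "computable n g"
  shows "computable n (\<lambda>xs. f xs - g xs)"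
proof -
  have "computable 2 (\<lambda>xs. xs ! 1 - xs ! 0)"
  proof (rule computable_prim_rec[of 2 1 "\<lambda>xs. xs ! 0" "\<lambda>xs. xs ! 1 - 1"])
    have "rec_nat a (\<lambda>k acc. acc - 1) n = a - n" for a n :: nat
      by (induction n) auto
    then show "xs ! 1 - xs ! 0 = rec_nat (tl xs ! 0) (\<lambda>k acc. (k # acc # tl xs) ! 1 - 1) (hd xs)"
      if "length xs = 2" for xs
      using that by (auto simp: length_Suc_conv numeral_2_eq_2)
  qed (rule computable_proj computable_pred | simp)+
  from computable_compose2[OF this, of 2 "\<lambda>xs. xs ! 1" "\<lambda>xs. xs ! 0"]
  have prim: "computable 2 (\<lambda>xs. xs ! 0 - xs ! 1)"
    by (simp add: computable_proj)
  show ?thesis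
    by (rule computable_compose2[OF prim]) (rule assms)+
qed

lemma computable_mult:
  assumes "computable n f" "computable n g"
  shows "computable n (\<lambda>xs. f xs * g xs)"
proof -
  have prim: "computable 2 (\<lambda>xs. xs ! 0 * xs ! 1)"
  proof (rule computable_prim_rec[of 2 1 "\<lambda>xs. 0" "\<lambda>xs. xs ! 1 + xs ! 2"])
    have "rec_nat 0 (\<lambda>k acc. acc + a) n = n * a" for a n :: nat
      by (induction n) auto
    then show "xs ! 0 * xs ! 1 = rec_nat 0 (\<lambda>k acc. (k # acc # tl xs) ! 1 + (k # acc # tl xs) ! 2) (hd xs)"
      if "length xs = 2" for xs
      using that by (auto simp: length_Suc_conv numeral_2_eq_2)
  qed (rule computable_proj computable_zero computable_add | simp)+
  show ?thesis
    by (rule computable_compose2[OF prim]) (rule assms)+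
qed

lemma computable_triangle:
  assumes "computable n f"
  shows "computable n (\<lambda>xs. triangle (f xs))"
proof -
  have prim: "computable 1 (\<lambda>xs. triangle (xs ! 0))"
  proof (rule computable_prim_rec[of 1 0 "\<lambda>xs. 0" "\<lambda>xs. Suc (xs ! 1 + xs ! 0)"])
    have "rec_nat 0 (\<lambda>k acc. Suc (acc + k)) n = triangle n" for n
      by (induction n) auto
    then show "triangle (xs ! 0) = rec_nat 0 (\<lambda>k acc. Suc ((k # acc # tl xs) ! 1 + (k # acc # tl xs) ! 0)) (hd xs)"
      if "length xs = 1" for xs
      using that by (auto simp: length_Suc_conv)
  qed (rule computable_proj computable_zero computable_add computable_Suc | simp)+
  show ?thesis
    by (rule computable_compose1[OF prim]) (rule assms)+
qed

lemma computable_prod_encode: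
  "computable n f \<Longrightarrow> computable n g \<Longrightarrow> computable n (\<lambda>xs. prod_encode (f xs, g xs))"
  unfolding prod_encode_def by (simp add: computable_add computable_triangle)

definition pfst :: "nat \<Rightarrow> nat" where
  "pfst n = fst (prod_decode n)"

definition psnd :: "nat \<Rightarrow> nat" where
  "psnd n = snd (prod_decode n)"

lemma pfst_prod_encode [simp]: "pfst (prod_encode (a, b)) = a"
  by (simp add: pfst_def)

lemma psnd_prod_encode [simp]: "psnd (prod_encode (a, b)) = b"
  by (simp add: psnd_def)

lemma prod_encode_pfst_psnd [simp]: "prod_encode (pfst n, psnd n) = n"
  by (simp add: pfst_def psnd_def)

lemma triangle_pfst_psnd: "triangle (pfst n + psnd n) + pfst n = n"
  using prod_encode_pfst_psnd[of n] unfolding prod_encode_def by simp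

lemma Least_triangle_gt: "(LEAST d. n < triangle (Suc d)) = pfst n + psnd n"
proof (rule Least_equality)
  show "n < triangle (Suc (pfst n + psnd n))"
    using triangle_pfst_psnd[of n] by simp
  show "pfst n + psnd n \<le> d" if "n < triangle (Suc d)" for d
  proof (rule ccontr)
    assume "\<not> pfst n + psnd n \<le> d"
    then have "triangle (Suc d) \<le> triangle (pfst n + psnd n)"
      unfolding triangle_def by (intro div_le_mono mult_le_mono) auto
    with that triangle_pfst_psnd[of n] show False
      by linarith
  qed
qed

lemma computable_Least_triangle_gt:
  assumes "computable n f"
  shows "computable n (\<lambda>xs. LEAST d. f xs < triangle (Suc d))"
proof -
  have f: "computable (Suc 1) (\<lambda>ys. 1 - (triangle (Suc (ys ! 0)) - ys ! 1))"
    by (rule computable_diff computable_const computable_triangle computable_Suc computable_proj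
        | simp)+
  have ex: "\<exists>d. 1 - (triangle (Suc ((d # xs) ! 0)) - (d # xs) ! 1) = 0" if "length xs = 1" for xs
    by (intro exI[of _ "xs ! 0"]) simp
  have eq: "(\<lambda>xs. LEAST d. 1 - (triangle (Suc ((d # xs) ! 0)) - (d # xs) ! 1) = 0)
      = (\<lambda>xs. LEAST d. xs ! 0 < triangle (Suc d))"
    by (simp add: Suc_le_eq)
  have prim: "computable 1 (\<lambda>xs. LEAST d. xs ! 0 < triangle (Suc d))"
    using computable_Least[OF f ex] unfolding eq .
  show ?thesis
    by (rule computable_compose1[OF prim]) (rule assms)
qed

lemma computable_pfst:
  assumes "computable n f"
  shows "computable n (\<lambda>xs. pfst (f xs))"
proof -
  have "pfst m = m - triangle (LEAST d. m < triangle (Suc d))" for m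
    using triangle_pfst_psnd[of m] unfolding Least_triangle_gt by linarith
  then have eq: "pfst = (\<lambda>m. m - triangle (LEAST d. m < triangle (Suc d)))" ..
  show ?thesis
    unfolding eq by (intro computable_diff computable_triangle computable_Least_triangle_gt assms)
qed

lemma computable_psnd:
  assumes "computable n f"
  shows "computable n (\<lambda>xs. psnd (f xs))"
proof -
  have "psnd m = (LEAST d. m < triangle (Suc d)) - pfst m" for m
    unfolding Least_triangle_gt by simp
  then have eq: "psnd = (\<lambda>m. (LEAST d. m < triangle (Suc d)) - pfst m)" ..
  show ?thesis
    unfolding eq by (intro computable_diff computable_pfst computable_Least_triangle_gt assms)
qed

definition computable1 :: "(nat \<Rightarrow> nat) \<Rightarrow> bool" where
  "computable1 f \<longleftrightarrow> (\<exists>r. \<forall>x. rec_eval r [x] (f x))"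

definition computable_pred :: "(nat \<Rightarrow> bool) \<Rightarrow> bool" where
  "computable_pred P \<longleftrightarrow> computable1 (\<lambda>x. if P x then 1 else 0)"

lemma decidable_iff_computable_pred: "decidable A \<longleftrightarrow> computable_pred (\<lambda>x. x \<in> A)"
  unfolding decidable_def computable_pred_def computable1_def ..

lemma computable1_iff_computable: "computable1 f \<longleftrightarrow> computable 1 (\<lambda>xs. f (xs ! 0))"
  unfolding computable1_def computable_def
  by (metis (no_types, lifting) list.size(3) One_nat_def length_Suc_conv
      nth_Cons_0 length_0_conv)

lemma computable_comp_computable1:
  "computable1 f \<Longrightarrow> computable n g \<Longrightarrow> computable n (\<lambda>xs. f (g xs))"
  unfolding computable1_iff_computable by (rule computable_compose1)

lemma computable1_comp: "computable1 f \<Longrightarrow> computable1 g \<Longrightarrow> computable1 (\<lambda>x. f (g x))"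
  unfolding computable1_iff_computable[of "\<lambda>x. f (g x)"]
  by (rule computable_comp_computable1) (simp_all add: computable1_iff_computable)

lemma computable1_id: "computable1 (\<lambda>x. x)"
  unfolding computable1_iff_computable by (rule computable_proj) simp

lemma computable1_const: "computable1 (\<lambda>x. k)"
  unfolding computable1_iff_computable by (rule computable_const)

lemma computable1_Suc: "computable1 f \<Longrightarrow> computable1 (\<lambda>x. Suc (f x))"
  unfolding computable1_iff_computable by (rule computable_Suc)

lemma computable1_add: "computable1 f \<Longrightarrow> computable1 g \<Longrightarrow> computable1 (\<lambda>x. f x + g x)"
  unfolding computable1_iff_computable by (rule computable_add)

lemma computable1_diff: "computable1 f \<Longrightarrow> computable1 g \<Longrightarrow> computable1 (\<lambda>x. f x - g x)"
  unfolding computable1_iff_computable by (rule computable_diff)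

lemma computable1_mult: "computable1 f \<Longrightarrow> computable1 g \<Longrightarrow> computable1 (\<lambda>x. f x * g x)"
  unfolding computable1_iff_computable by (rule computable_mult)

lemma computable1_prod_encode:
  "computable1 f \<Longrightarrow> computable1 g \<Longrightarrow> computable1 (\<lambda>x. prod_encode (f x, g x))"
  unfolding computable1_iff_computable by (rule computable_prod_encode)

lemma computable1_pfst: "computable1 f \<Longrightarrow> computable1 (\<lambda>x. pfst (f x))"
  unfolding computable1_iff_computable by (rule computable_pfst)

lemma computable1_psnd: "computable1 f \<Longrightarrow> computable1 (\<lambda>x. psnd (f x))"
  unfolding computable1_iff_computable by (rule computable_psnd)

lemma computable1_pair_arg:
  assumes "computable1 (\<lambda>z. f (pfst z) (psnd z))" "computable1 g" "computable1 h"
  shows "computable1 (\<lambda>x. f (g x) (h x))"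
  using computable1_comp[OF assms(1) computable1_prod_encode[OF assms(2,3)]] by simp

lemma computable1_triple_arg:
  assumes "computable1 (\<lambda>z. f (pfst z) (pfst (psnd z)) (psnd (psnd z)))"
    and "computable1 g" "computable1 h" "computable1 k"
  shows "computable1 (\<lambda>x. f (g x) (h x) (k x))"
  using computable1_comp[OF assms(1) computable1_prod_encode[OF assms(2) computable1_prod_encode[OF assms(3,4)]]]
  by simp

lemma computable_pred_cong: "computable_pred P \<Longrightarrow> (\<And>x. P x \<longleftrightarrow> Q x) \<Longrightarrow> computable_pred Q"
  unfolding computable_pred_def by simp

lemma computable_pred_comp: "computable_pred P \<Longrightarrow> computable1 g \<Longrightarrow> computable_pred (\<lambda>x. P (g x))"
  unfolding computable_pred_def by (rule computable1_comp)

lemma computable_pred_const: "computable_pred (\<lambda>x. b)"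
  unfolding computable_pred_def by (rule computable1_const)

lemma computable_pred_eq: "computable1 f \<Longrightarrow> computable1 g \<Longrightarrow> computable_pred (\<lambda>x. f x = g x)"
proof -
  assume "computable1 f" "computable1 g"
  then have "computable1 (\<lambda>x. 1 - ((f x - g x) + (g x - f x)))"
    by (intro computable1_diff computable1_add computable1_const)
  then show ?thesis
    unfolding computable_pred_def by (rule back_subst[of computable1]) (auto simp: fun_eq_iff)
qed

lemma computable_pred_less: "computable1 f \<Longrightarrow> computable1 g \<Longrightarrow> computable_pred (\<lambda>x. f x < g x)"
proof -
  assume "computable1 f" "computable1 g"
  then have "computable1 (\<lambda>x. 1 - (1 - (g x - f x)))"
    by (intro computable1_diff computable1_const)
  then show ?thesis
    unfolding computable_pred_def by (rule back_subst[of computable1]) (auto simp: fun_eq_iff)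
qed

lemma computable_pred_not: "computable_pred P \<Longrightarrow> computable_pred (\<lambda>x. \<not> P x)"
  unfolding computable_pred_def
  by (drule computable1_diff[OF computable1_const[of 1]])
    (erule back_subst[of computable1], auto simp: fun_eq_iff)

lemma computable_pred_conj:
  "computable_pred P \<Longrightarrow> computable_pred Q \<Longrightarrow> computable_pred (\<lambda>x. P x \<and> Q x)"
  unfolding computable_pred_def
  by (drule (1) computable1_mult) (erule back_subst[of computable1], auto simp: fun_eq_iff)

lemma computable_pred_disj:
  "computable_pred P \<Longrightarrow> computable_pred Q \<Longrightarrow> computable_pred (\<lambda>x. P x \<or> Q x)"
  using computable_pred_not[OF computable_pred_conj[OF computable_pred_not computable_pred_not]]
  by simp

lemma computable_pred_le: "computable1 f \<Longrightarrow> computable1 g \<Longrightarrow> computable_pred (\<lambda>x. f x \<le> g x)"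
  using computable_pred_not[OF computable_pred_less, of g f] by (simp add: not_less)

lemma computable1_If:
  assumes "computable_pred P" "computable1 f" "computable1 g"
  shows "computable1 (\<lambda>x. if P x then f x else g x)"
proof -
  have "computable1 (\<lambda>x. (if P x then 1 else 0) * f x + (1 - (if P x then 1 else 0)) * g x)"
    using assms unfolding computable_pred_def
    by (intro computable1_add computable1_mult computable1_diff computable1_const)
  then show ?thesis
    by (rule back_subst[of computable1]) (auto simp: fun_eq_iff)
qed

lemma computable_pred_ex_list:
  "(\<And>a. a \<in> set as \<Longrightarrow> computable_pred (P a)) \<Longrightarrow> computable_pred (\<lambda>x. \<exists>a\<in>set as. P a x)"
  by (induction as) (simp_all add: computable_pred_const computable_pred_disj)

lemma computable_pred_all_list:
  "(\<And>a. a \<in> set as \<Longrightarrow> computable_pred (P a)) \<Longrightarrow> computable_pred (\<lambda>x. \<forall>a\<in>set as. P a x)"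
  by (induction as) (simp_all add: computable_pred_const computable_pred_conj)

lemma computable1_Least:
  assumes f: "computable1 (\<lambda>z. f (pfst z) (psnd z))" and ex: "\<And>x. \<exists>y. f x y = 0"
  shows "computable1 (\<lambda>x. LEAST y. f x y = 0)"
proof -
  have "computable 2 (\<lambda>xs. f (xs ! 1) (xs ! 0))"
    using computable_comp_computable1[OF f computable_prod_encode[OF computable_proj computable_proj]]
    by simp
  then have "computable (Suc 1) (\<lambda>xs. f (xs ! 1) (xs ! 0))"
    by (simp add: numeral_2_eq_2)
  from computable_Least[OF this] have "computable 1 (\<lambda>xs. LEAST y. f (xs ! 0) y = 0)"
    using ex by simp
  then show ?thesis
    unfolding computable1_iff_computable .
qed

lemma computable1_funpow:
  assumes h: "computable1 (\<lambda>z. h (pfst z) (psnd z))" and N: "computable1 N" and S: "computable1 S"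
  shows "computable1 (\<lambda>x. (h x ^^ N x) (S x))"
proof -
  have step: "computable (Suc 3) (\<lambda>ys. h (ys ! 2) (ys ! 1))"
    using computable_comp_computable1[OF h computable_prod_encode[OF computable_proj computable_proj]]
    by simp
  have "rec_nat s (\<lambda>k acc. h x acc) n = (h x ^^ n) s" for x s n
    by (induction n) auto
  then have "computable 3 (\<lambda>xs. (h (xs ! 1) ^^ (xs ! 0)) (xs ! 2))"
    by (intro computable_prim_rec[of 3 2 "\<lambda>ys. ys ! 1", OF _ _ step])
      (auto simp: computable_proj length_Suc_conv numeral_3_eq_3 numeral_2_eq_2)
  from computable_comp[OF this, of "[\<lambda>xs. N (xs ! 0), \<lambda>xs. xs ! 0, \<lambda>xs. S (xs ! 0)]" 1]
  show ?thesis
    using N S unfolding computable1_iff_computable by (simp add: computable_proj)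
qed

lemma computable_pred_ex_less:
  assumes P: "computable_pred (\<lambda>z. P (pfst z) (psnd z))" and B: "computable1 B"
  shows "computable_pred (\<lambda>x. \<exists>i<B x. P x i)"
proof -
  define f where "f x y = (if B x \<le> y \<or> P x y then 0 else 1::nat)" for x y
  have "computable1 (\<lambda>z. f (pfst z) (psnd z))"
    unfolding f_def
    by (intro computable1_If computable_pred_disj computable_pred_le computable1_comp[OF B]
        computable1_pfst computable1_psnd computable1_id computable1_const P)
  then have least: "computable1 (\<lambda>x. LEAST y. f x y = 0)"
    by (rule computable1_Least) (auto simp: f_def)
  have eq: "(LEAST y. f x y = 0) < B x \<longleftrightarrow> (\<exists>i<B x. P x i)" for x
  proof
    assume "(LEAST y. f x y = 0) < B x"
    moreover have "f x (LEAST y. f x y = 0) = 0"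
      by (rule LeastI[of _ "B x"]) (simp add: f_def)
    ultimately show "\<exists>i<B x. P x i"
      by (auto simp: f_def split: if_splits)
  next
    assume "\<exists>i<B x. P x i"
    then obtain i where "i < B x" "P x i"
      by blast
    then show "(LEAST y. f x y = 0) < B x"
      using Least_le[of "\<lambda>y. f x y = 0" i] by (simp add: f_def)
  qed
  show ?thesis
    using computable_pred_less[OF least B] by (rule computable_pred_cong) (rule eq)
qed

lemma computable_pred_all_less:
  assumes "computable_pred (\<lambda>z. P (pfst z) (psnd z))" "computable1 B"
  shows "computable_pred (\<lambda>x. \<forall>i<B x. P x i)"
  using computable_pred_not[OF computable_pred_ex_less[OF computable_pred_not[OF assms(1)] assms(2)]]
  by simp

section \<open>Lists coded as numbers\<close>

definition code_hd :: "nat \<Rightarrow> nat" where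
  "code_hd L = pfst (L - 1)"

definition code_tl :: "nat \<Rightarrow> nat" where
  "code_tl L = psnd (L - 1)"

definition code_nth :: "nat \<Rightarrow> nat \<Rightarrow> nat" where
  "code_nth L k = code_hd ((code_tl ^^ k) L)"

lemma code_hd_Suc_prod_encode [simp]: "code_hd (Suc (prod_encode (a, b))) = a"
  by (simp add: code_hd_def)

lemma code_tl_Suc_prod_encode [simp]: "code_tl (Suc (prod_encode (a, b))) = b"
  by (simp add: code_tl_def)

lemma code_tl_0 [simp]: "code_tl 0 = 0"
  using psnd_prod_encode[of 0 0] by (simp add: code_tl_def prod_encode_def)

lemma funpow_code_tl: "(code_tl ^^ k) (list_encode xs) = list_encode (drop k xs)"
proof (induction k arbitrary: xs)
  case 0
  then show ?case by simp
next
  case (Suc k)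
  then show ?case
    using Suc.IH[of "[]"] by (cases xs) (simp_all add: funpow_Suc_right del: funpow.simps)
qed

lemma code_nth_list_encode: "k < length xs \<Longrightarrow> code_nth (list_encode xs) k = xs ! k"
  by (simp add: code_nth_def funpow_code_tl Cons_nth_drop_Suc[symmetric])

lemma code_nth_list_decode: "k < length (list_decode L) \<Longrightarrow> code_nth L k = list_decode L ! k"
  using code_nth_list_encode[of k "list_decode L"] by simp

lemma length_le_list_encode: "length xs \<le> list_encode xs"
proof (induction xs)
  case (Cons a xs)
  then show ?case using le_prod_encode_2[of "list_encode xs" a] by simp
qed simp

lemma mem_less_list_encode: "x \<in> set xs \<Longrightarrow> x < list_encode xs"
proof (induction xs)
  case (Cons a xs)
  then show ?case
    using le_prod_encode_1[of a "list_encode xs"] le_prod_encode_2[of "list_encode xs" a] by auto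
qed simp

lemma computable1_code_hd: "computable1 f \<Longrightarrow> computable1 (\<lambda>x. code_hd (f x))"
  unfolding code_hd_def by (intro computable1_pfst computable1_diff computable1_const)

lemma computable1_code_tl: "computable1 f \<Longrightarrow> computable1 (\<lambda>x. code_tl (f x))"
  unfolding code_tl_def by (intro computable1_psnd computable1_diff computable1_const)

lemma computable1_funpow_code_tl:
  "computable1 f \<Longrightarrow> computable1 g \<Longrightarrow> computable1 (\<lambda>x. (code_tl ^^ g x) (f x))"
  using computable1_funpow[of "\<lambda>x s. code_tl s" g f]
  by (simp add: computable1_code_tl computable1_psnd computable1_id)

lemma computable1_code_nth:
  "computable1 f \<Longrightarrow> computable1 g \<Longrightarrow> computable1 (\<lambda>x. code_nth (f x) (g x))"
  unfolding code_nth_def by (intro computable1_code_hd computable1_funpow_code_tl)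

lemma computable1_length_list_decode:
  assumes "computable1 f"
  shows "computable1 (\<lambda>x. length (list_decode (f x)))"
proof -
  have "length (list_decode L) = (LEAST k. (code_tl ^^ k) L = 0)" for L
    using funpow_code_tl[of _ "list_decode L"]
    by (intro Least_equality[symmetric]) (auto simp: list_encode_eq[of _ "[]", simplified])
  moreover have "computable1 (\<lambda>L. LEAST k. (code_tl ^^ k) L = 0)"
  proof (rule computable1_Least)
    show "computable1 (\<lambda>z. (code_tl ^^ psnd z) (pfst z))"
      by (intro computable1_funpow_code_tl computable1_pfst computable1_psnd computable1_id)
    show "\<exists>k. (code_tl ^^ k) L = 0" for L
      using funpow_code_tl[of L "list_decode L"] length_le_list_encode[of "list_decode L"]
      by (intro exI[of _ L]) simp
  qed
  ultimately show ?thesis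
    using computable1_comp assms by simp
qed

lemma computable1_list_encode_map:
  "(\<And>a. a \<in> set as \<Longrightarrow> computable1 (F a)) \<Longrightarrow> computable1 (\<lambda>x. list_encode (map (\<lambda>a. F a x) as))"
  by (induction as) (simp_all add: computable1_const computable1_Suc computable1_prod_encode)

lemma funpow_foldl_step:
  assumes "\<And>s. h s = (if pfst s = 0 then s
    else prod_encode (code_tl (pfst s), g (psnd s) (code_hd (pfst s))))"
  shows "(h ^^ n) (prod_encode (list_encode xs, a)) =
    prod_encode (list_encode (drop n xs), foldl g a (take n xs))"
proof (induction n arbitrary: xs a)
  case (Suc n)
  have "h (prod_encode (list_encode xs, a)) =
      (case xs of [] \<Rightarrow> prod_encode (list_encode xs, a) | b # ys \<Rightarrow> prod_encode (list_encode ys, g a b))"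
    by (cases xs) (simp_all add: assms)
  then show ?case
    using Suc.IH Suc.IH[of "[]"] by (cases xs) (simp_all add: funpow_Suc_right del: funpow.simps)
qed simp

lemma computable1_foldl:
  assumes g: "computable1 (\<lambda>z. g (pfst z) (pfst (psnd z)) (psnd (psnd z)))"
    and P: "computable1 P" and L: "computable1 L" and A: "computable1 A"
  shows "computable1 (\<lambda>x. foldl (g (P x)) (A x) (list_decode (L x)))"
proof -
  define h where "h x s = (if pfst s = 0 then s
      else prod_encode (code_tl (pfst s), g (P x) (psnd s) (code_hd (pfst s))))" for x s
  have "computable1 (\<lambda>z. g (P (pfst z)) (psnd (psnd z)) (code_hd (pfst (psnd z))))"
    using computable1_comp[OF g, of "\<lambda>z. prod_encode (P (pfst z),
        prod_encode (psnd (psnd z), code_hd (pfst (psnd z))))"]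
    by (simp add: computable1_prod_encode computable1_comp[OF P] computable1_pfst computable1_psnd
        computable1_code_hd computable1_id)
  then have "computable1 (\<lambda>z. h (pfst z) (psnd z))"
    unfolding h_def
    by (intro computable1_If computable_pred_eq computable1_prod_encode computable1_code_tl
        computable1_pfst computable1_psnd computable1_id computable1_const)
  then have "computable1 (\<lambda>x. psnd ((h x ^^ L x) (prod_encode (L x, A x))))"
    by (intro computable1_psnd computable1_funpow L computable1_prod_encode A)
  moreover have "psnd ((h x ^^ L x) (prod_encode (L x, A x))) =
      foldl (g (P x)) (A x) (list_decode (L x))" for x
    using funpow_foldl_step[of "h x", OF h_def, of "L x" "list_decode (L x)" "A x"]
      length_le_list_encode[of "list_decode (L x)"]
    by simp
  ultimately show ?thesis
    by simp
qed

lemma foldl_list_encode_Cons: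
  "foldl (\<lambda>acc a. Suc (prod_encode (f a, acc))) (list_encode ys) xs =
    list_encode (rev (map f xs) @ ys)"
  by (induction xs arbitrary: ys) (simp_all flip: list_encode.simps(2))

lemma computable1_list_encode_map_list_decode:
  assumes f: "computable1 (\<lambda>z. f (pfst z) (psnd z))" and P: "computable1 P" and L: "computable1 L"
  shows "computable1 (\<lambda>x. list_encode (map (f (P x)) (list_decode (L x))))"
proof -
  let ?cons = "\<lambda>f acc a. Suc (prod_encode (f a, acc))"
  have "computable1 (\<lambda>z. ?cons (f (pfst z)) (pfst (psnd z)) (psnd (psnd z)))"
    using computable1_comp[OF f, of "\<lambda>z. prod_encode (pfst z, psnd (psnd z))"]
    by (simp add: computable1_Suc computable1_prod_encode computable1_pfst computable1_psnd
        computable1_id)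
  from computable1_foldl[OF this P L computable1_const[of 0]]
  have rev_map: "computable1 (\<lambda>x. foldl (?cons (f (P x))) 0 (list_decode (L x)))" .
  have "computable1 (\<lambda>z. ?cons (\<lambda>a. a) (pfst (psnd z)) (psnd (psnd z)))"
    by (simp add: computable1_Suc computable1_prod_encode computable1_pfst computable1_psnd
        computable1_id)
  from computable1_foldl[OF this computable1_const rev_map computable1_const[of 0]]
  have "computable1 (\<lambda>x. foldl (?cons (\<lambda>a. a)) 0
      (list_decode (foldl (?cons (f (P x))) 0 (list_decode (L x)))))" .
  moreover have "foldl (?cons (\<lambda>a. a)) 0 (list_decode (foldl (?cons (f (P x))) 0 (list_decode (L x))))
      = list_encode (map (f (P x)) (list_decode (L x)))" for x
    using foldl_list_encode_Cons[of "f (P x)" "[]"] foldl_list_encode_Cons[of "\<lambda>a. a" "[]"] by simp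
  ultimately show ?thesis
    by simp
qed

section \<open>Formulas coded as numbers\<close>

lemma psnd_less:
  assumes "pfst n \<noteq> 0"
  shows "psnd n < n"
proof -
  have "k \<le> triangle k" for k
    by (induction k) auto
  from this[of "pfst n + psnd n"] triangle_pfst_psnd[of n] assms show ?thesis
    by linarith
qed

lemma form_dec_arg_less: "pfst n \<noteq> 0 \<Longrightarrow> a \<in> set (list_decode (psnd n)) \<Longrightarrow> a < n"
  using psnd_less mem_less_list_encode[of a "list_decode (psnd n)"] by fastforce

function form_dec :: "nat \<Rightarrow> form" where
  "form_dec n = (if pfst n = 0 then Var (psnd n)
    else App (pfst n - 1) (map form_dec (list_decode (psnd n))))"
  by auto
termination
  by (relation "measure id") (auto intro: form_dec_arg_less)

declare form_dec.simps [simp del]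

lemma form_dec_form_enc [simp]: "form_dec (form_enc F) = F"
proof (induction F)
  case (Var n)
  then show ?case by (simp add: form_dec.simps)
next
  case (App c args)
  then show ?case by (subst form_dec.simps) (simp add: map_idI)
qed

lemma form_enc_form_dec [simp]: "form_enc (form_dec n) = n"
proof (induction n rule: form_dec.induct)
  case (1 n)
  show ?case
  proof (cases "pfst n = 0")
    case True
    then show ?thesis
      using prod_encode_pfst_psnd[of n] by (subst form_dec.simps) simp
  next
    case False
    then have "map (\<lambda>a. form_enc (form_dec a)) (list_decode (psnd n)) = list_decode (psnd n)"
      using 1 by (simp add: map_idI)
    then show ?thesis
      using False prod_encode_pfst_psnd[of n] by (subst form_dec.simps) (simp add: comp_def)
  qed
qed

lemma mem_image_form_enc: "x \<in> form_enc ` T \<longleftrightarrow> form_dec x \<in> T"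
  by (metis form_dec_form_enc form_enc_form_dec image_iff)

fun fold_form :: "(nat \<Rightarrow> nat) \<Rightarrow> (nat \<Rightarrow> nat \<Rightarrow> nat) \<Rightarrow> form \<Rightarrow> nat" where
  "fold_form v app (Var n) = v n"
| "fold_form v app (App c args) = app c (list_encode (map (fold_form v app) args))"

text \<open>Course-of-values form of the recursion: the value at code \<open>m\<close> is computed from the
  list of all values at smaller codes, stored in reverse order.\<close>

lemma fold_form_form_dec_history:
  fixes v app
  defines "R \<equiv> \<lambda>a. fold_form v app (form_dec a)"
  shows "R m = (if pfst m = 0 then v (psnd m)
    else app (pfst m - 1) (list_encode (map (\<lambda>a. code_nth (list_encode (rev (map R [0..<m]))) (m - 1 - a))
      (list_decode (psnd m)))))"
proof (cases "pfst m = 0")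
  case True
  then show ?thesis
    unfolding R_def by (subst form_dec.simps) simp
next
  case False
  have children: "map (\<lambda>a. code_nth (list_encode (rev (map R [0..<m]))) (m - 1 - a)) (list_decode (psnd m))
      = map R (list_decode (psnd m))"
  proof (rule map_cong[OF refl])
    fix a
    assume "a \<in> set (list_decode (psnd m))"
    then have "a < m"
      using form_dec_arg_less[OF False] by blast
    then show "code_nth (list_encode (rev (map R [0..<m]))) (m - 1 - a) = R a"
      by (simp add: code_nth_list_encode rev_nth)
  qed
  have "R m = app (pfst m - 1) (list_encode (map R (list_decode (psnd m))))"
    using False unfolding R_def by (subst form_dec.simps) (simp add: comp_def)
  then show ?thesis
    unfolding children using False by simp
qed

lemma computable1_fold_form:
  assumes v: "computable1 (\<lambda>z. v (pfst z) (psnd z))"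
    and app: "computable1 (\<lambda>z. app (pfst z) (pfst (psnd z)) (psnd (psnd z)))"
    and P: "computable1 P" and X: "computable1 X"
  shows "computable1 (\<lambda>x. fold_form (v (P x)) (app (P x)) (form_dec (X x)))"
proof -
  define R where "R p a = fold_form (v p) (app p) (form_dec a)" for p a
  define node where "node p m H = (if pfst m = 0 then v p (psnd m)
     else app p (pfst m - 1) (list_encode (map (\<lambda>a. code_nth H (m - 1 - a)) (list_decode (psnd m)))))"
    for p m H
  define step where "step x s = prod_encode (Suc (pfst s), Suc (prod_encode (node (P x) (pfst s) (psnd s), psnd s)))"
    for x s
  have history: "(step x ^^ n) 0 = prod_encode (n, list_encode (rev (map (R (P x)) [0..<n])))" for x n
  proof (induction n)
    case 0
    then show ?case by (simp add: prod_encode_def)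
  next
    case (Suc n)
    then show ?case
      using fold_form_form_dec_history[of "v (P x)" "app (P x)" n]
      by (simp add: step_def node_def R_def)
  qed
  have "computable1 (\<lambda>z. step (pfst z) (psnd z))"
    unfolding step_def node_def
    by (intro computable1_prod_encode computable1_Suc computable1_If computable_pred_eq
        computable1_pfst computable1_psnd computable1_id computable1_const
        computable1_pair_arg[OF v] computable1_comp[OF P]
        computable1_triple_arg[OF app]
        computable1_diff computable1_list_encode_map_list_decode
        computable1_code_nth)
  then have "computable1 (\<lambda>x. code_hd (psnd ((step x ^^ Suc (X x)) 0)))"
    by (intro computable1_code_hd computable1_psnd computable1_funpow computable1_Suc X computable1_const)
  moreover have "code_hd (psnd ((step x ^^ Suc (X x)) 0)) = R (P x) (X x)" for x
    by (simp only: history) simp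
  ultimately show ?thesis
    unfolding R_def by simp
qed

lemma computable_pred_wf_form:
  assumes "computable1 g"
  shows "computable_pred (\<lambda>x. wf_form ar (form_dec (g x)))"
proof -
  define node where "node c L = (if c < length ar \<and> length (list_decode L) = code_nth (list_encode ar) c
      \<and> (\<forall>i<length (list_decode L). code_nth L i = 1) then 1 else 0::nat)" for c L
  have node_list_encode: "node c (list_encode L) =
      (if c < length ar \<and> length L = ar ! c \<and> (\<forall>i<length L. L ! i = 1) then 1 else 0)" for c L
    by (cases "c < length ar") (simp_all add: node_def code_nth_list_encode)
  have fold: "fold_form (\<lambda>n. 1) node F = (if wf_form ar F then 1 else 0)" for F
  proof (induction F)
    case (App c args)
    then have "map (fold_form (\<lambda>n. 1) node) args = map (\<lambda>a. if wf_form ar a then 1 else 0) args"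
      by simp
    then show ?case
      by (simp only: fold_form.simps node_list_encode) (auto simp: all_set_conv_all_nth)
  qed simp
  have "computable1 (\<lambda>z. node (pfst (psnd z)) (psnd (psnd z)))"
    unfolding node_def
    by (intro computable1_If computable_pred_conj computable_pred_less computable_pred_eq
        computable_pred_all_less computable1_length_list_decode computable1_code_nth
        computable1_pfst computable1_psnd computable1_id computable1_const)
  then have "computable1 (\<lambda>x. fold_form (\<lambda>n. 1) node (form_dec x))"
    using computable1_fold_form[of "\<lambda>p n. 1" "\<lambda>p. node" "\<lambda>x. 0" "\<lambda>x. x"]
    by (simp add: computable1_const computable1_id)
  then have "computable_pred (\<lambda>x. wf_form ar (form_dec x))"
    unfolding computable_pred_def fold .
  then show ?thesis
    using assms by (rule computable_pred_comp)
qed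

definition semidecidable :: "nat set \<Rightarrow> bool" where
  "semidecidable A \<longleftrightarrow>
    (\<exists>P. computable_pred (\<lambda>z. P (pfst z) (psnd z)) \<and> (\<forall>x. x \<in> A \<longleftrightarrow> (\<exists>w. P x w)))"

theorem decidable_if_semidecidable_Compl:
  assumes "semidecidable A" and "semidecidable (- A)"
  shows "decidable A"
proof -
  obtain P where P: "computable_pred (\<lambda>z. P (pfst z) (psnd z))" and A: "\<And>x. x \<in> A \<longleftrightarrow> (\<exists>w. P x w)"
    using assms(1) unfolding semidecidable_def by blast
  obtain Q where Q: "computable_pred (\<lambda>z. Q (pfst z) (psnd z))" and nA: "\<And>x. x \<notin> A \<longleftrightarrow> (\<exists>w. Q x w)"
    using assms(2) unfolding semidecidable_def by auto
  define f where "f x w = (if P x w \<or> Q x w then 0 else 1::nat)" for x w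
  define search where "search x = (LEAST w. f x w = 0)" for x
  have "computable1 (\<lambda>z. f (pfst z) (psnd z))"
    unfolding f_def using P Q by (intro computable1_If computable_pred_disj computable1_const)
  then have "computable1 search"
    unfolding search_def by (rule computable1_Least) (metis A nA f_def)
  then have "computable_pred (\<lambda>x. P x (search x))"
    using computable_pred_comp[OF P computable1_prod_encode[OF computable1_id]] by simp
  moreover have "P x (search x) \<longleftrightarrow> x \<in> A" for x
  proof -
    have "f x (search x) = 0"
      unfolding search_def by (rule LeastI_ex) (metis A nA f_def)
    then show ?thesis
      using A nA by (auto simp: f_def split: if_splits)
  qed
  ultimately show ?thesis
    unfolding decidable_iff_computable_pred by (rule computable_pred_cong)
qed

section \<open>The theorems of a calculus form a semidecidable set\<close>

fun vars :: "form \<Rightarrow> nat set" where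
  "vars (Var n) = {n}"
| "vars (App c args) = (\<Union>a\<in>set args. vars a)"

lemma finite_vars: "finite (vars F)"
  by (induction F) auto

lemma subst_cong: "(\<And>n. n \<in> vars F \<Longrightarrow> \<sigma> n = \<tau> n) \<Longrightarrow> subst \<sigma> F = subst \<tau> F"
  by (induction F) auto

lemma form_dec_eq_iff: "form_dec x = F \<longleftrightarrow> x = form_enc F"
  by auto

definition subst_of_code :: "nat \<Rightarrow> nat \<Rightarrow> form" where
  "subst_of_code s n = (if n < length (list_decode s) then form_dec (list_decode s ! n) else Var 0)"

lemma wf_subst_subst_of_code:
  "wf_subst ar (subst_of_code s) \<longleftrightarrow> (\<forall>i<length (list_decode s). wf_form ar (form_dec (code_nth s i)))"
  unfolding wf_subst_def subst_of_code_def by (auto simp: code_nth_list_decode)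

lemma computable1_form_enc_subst:
  assumes "computable1 g"
  shows "computable1 (\<lambda>x. form_enc (subst (subst_of_code (g x)) F))"
proof -
  have "computable1 (\<lambda>s. form_enc (subst (subst_of_code s) F))"
  proof (induction F)
    case (Var n)
    have "computable1 (\<lambda>s. if n < length (list_decode s) then code_nth s n else 0)"
      by (intro computable1_If computable_pred_less computable1_length_list_decode
          computable1_code_nth computable1_id computable1_const)
    then show ?case
      by (rule back_subst[of computable1])
        (auto simp: subst_of_code_def code_nth_list_decode prod_encode_def)
  next
    case (App c args)
    then show ?case
      by (simp add: comp_def computable1_prod_encode computable1_const computable1_list_encode_map)
  qed
  then show ?thesis
    using assms by (rule computable1_comp)
qed

definition justified :: "calc \<Rightarrow> form list \<Rightarrow> nat \<Rightarrow> (nat \<Rightarrow> form) \<Rightarrow> bool" where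
  "justified C ds i \<sigma> \<longleftrightarrow> (\<exists>A\<in>set (axioms C). ds ! i = subst \<sigma> A) \<or>
     (\<exists>(ps, c)\<in>set (rules C). ds ! i = subst \<sigma> c \<and> (\<forall>p\<in>set ps. subst \<sigma> p \<in> set (take i ds)))"

lemma derivation_iff_justified:
  "derivation ar C ds \<longleftrightarrow> (\<forall>i<length ds. \<exists>\<sigma>. wf_subst ar \<sigma> \<and> justified C ds i \<sigma>)"
  unfolding derivation_def justified_def split_def by blast

definition calc_forms :: "calc \<Rightarrow> form set" where
  "calc_forms C = set (axioms C) \<union> (\<Union>(ps, c)\<in>set (rules C). insert c (set ps))"

lemma justified_cong:
  assumes "\<And>n. n \<in> (\<Union>F\<in>calc_forms C. vars F) \<Longrightarrow> \<sigma> n = \<tau> n"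
  shows "justified C ds i \<sigma> \<longleftrightarrow> justified C ds i \<tau>"
proof -
  have "subst \<sigma> F = subst \<tau> F" if "F \<in> calc_forms C" for F
    using that assms by (blast intro: subst_cong)
  then show ?thesis
    unfolding justified_def calc_forms_def by fastforce
qed

text \<open>A derivation is coded as the list of its steps; each step is a pair of the code of the
  formula derived and the code of the list of formulas substituted for the variables \<open>X\<^sub>0, X\<^sub>1, \<dots>\<close>
  (further variables are mapped to \<open>X\<^sub>0\<close>).\<close>

definition forms_of_code :: "nat \<Rightarrow> form list" where
  "forms_of_code W = map (\<lambda>e. form_dec (pfst e)) (list_decode W)"

definition entry_subst :: "nat \<Rightarrow> nat \<Rightarrow> nat \<Rightarrow> form" where
  "entry_subst W k = subst_of_code (psnd (code_nth W k))"

definition derivation_code :: "nat list \<Rightarrow> calc \<Rightarrow> nat \<Rightarrow> bool" where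
  "derivation_code ar C W \<longleftrightarrow> (\<forall>k<length (list_decode W).
     wf_subst ar (entry_subst W k) \<and> justified C (forms_of_code W) k (entry_subst W k))"

lemma derivation_forms_of_code: "derivation_code ar C W \<Longrightarrow> derivation ar C (forms_of_code W)"
  unfolding derivation_iff_justified derivation_code_def by (auto simp: forms_of_code_def)

lemma derivation_code_of_derivation:
  assumes "derivation ar C ds"
  shows "\<exists>W. derivation_code ar C W \<and> forms_of_code W = ds"
proof -
  have "\<forall>i. \<exists>\<sigma>. i < length ds \<longrightarrow> wf_subst ar \<sigma> \<and> justified C ds i \<sigma>"
    using assms unfolding derivation_iff_justified by blast
  from choice[OF this] obtain \<sigma>
    where \<sigma>: "\<And>i. i < length ds \<Longrightarrow> wf_subst ar (\<sigma> i) \<and> justified C ds i (\<sigma> i)"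
    by blast
  define V where "V = (\<Union>F\<in>calc_forms C. vars F)"
  have "finite V"
    unfolding V_def calc_forms_def by (auto simp: finite_vars)
  then obtain N where N: "\<And>n. n \<in> V \<Longrightarrow> n < N"
    using finite_nat_set_iff_bounded by auto
  define W where "W = list_encode (map (\<lambda>i. prod_encode (form_enc (ds ! i),
    list_encode (map (\<lambda>n. form_enc (\<sigma> i n)) [0..<N]))) [0..<length ds])"
  have entry: "entry_subst W k n = (if n < N then \<sigma> k n else Var 0)" if "k < length ds" for k n
    using that by (simp add: W_def entry_subst_def subst_of_code_def code_nth_list_encode)
  have forms: "forms_of_code W = ds"
    by (simp add: W_def forms_of_code_def comp_def map_nth)
  have "derivation_code ar C W"
    unfolding derivation_code_def forms
  proof (intro allI impI conjI)
    fix k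
    assume k: "k < length (list_decode W)"
    then have k: "k < length ds"
      by (simp add: W_def)
    show "wf_subst ar (entry_subst W k)"
      using \<sigma>[OF k] by (simp add: entry[OF k] wf_subst_def)
    have "justified C ds k (entry_subst W k) \<longleftrightarrow> justified C ds k (\<sigma> k)"
      by (rule justified_cong) (simp add: entry[OF k] N[unfolded V_def])
    then show "justified C ds k (entry_subst W k)"
      using \<sigma>[OF k] by blast
  qed
  with forms show ?thesis
    by blast
qed

lemma computable_pred_derivation_code: "computable_pred (derivation_code ar C)"
proof -
  define F where "F W k = pfst (code_nth W k)" for W k
  define S where "S W k = psnd (code_nth W k)" for W k
  define step where "step W k \<longleftrightarrow>
    (\<forall>i<length (list_decode (S W k)). wf_form ar (form_dec (code_nth (S W k) i))) \<and>
    ((\<exists>A\<in>set (axioms C). F W k = form_enc (subst (subst_of_code (S W k)) A)) \<or>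
     (\<exists>r\<in>set (rules C). F W k = form_enc (subst (subst_of_code (S W k)) (snd r)) \<and>
        (\<forall>p\<in>set (fst r). \<exists>i<k. F W i = form_enc (subst (subst_of_code (S W k)) p))))" for W k
  have "computable_pred (\<lambda>z. step (pfst z) (psnd z))"
    unfolding step_def F_def S_def
    by (intro computable_pred_conj computable_pred_disj computable_pred_all_less computable_pred_ex_less
        computable_pred_ex_list computable_pred_all_list computable_pred_eq computable_pred_wf_form
        computable1_form_enc_subst computable1_length_list_decode computable1_code_nth
        computable1_pfst computable1_psnd computable1_id computable1_const)
  then have all_steps: "computable_pred (\<lambda>W. \<forall>k<length (list_decode W). step W k)"
    by (intro computable_pred_all_less computable1_length_list_decode computable1_id)
  have step_iff: "step W k \<longleftrightarrow>
      wf_subst ar (entry_subst W k) \<and> justified C (forms_of_code W) k (entry_subst W k)"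
    if "k < length (list_decode W)" for W k
  proof -
    have "forms_of_code W ! i = G \<longleftrightarrow> F W i = form_enc G" if "i \<le> k" for i G
      using that \<open>k < length (list_decode W)\<close>
      by (simp add: forms_of_code_def F_def code_nth_list_decode form_dec_eq_iff)
    moreover have "G \<in> set (take k (forms_of_code W)) \<longleftrightarrow> (\<exists>i<k. forms_of_code W ! i = G)" for G
      using \<open>k < length (list_decode W)\<close> by (auto simp: in_set_conv_nth forms_of_code_def)
    ultimately show ?thesis
      unfolding step_def justified_def entry_subst_def wf_subst_subst_of_code S_def[symmetric]
      by (fastforce simp: case_prod_beta)
  qed
  show ?thesis
    unfolding derivation_code_def
    by (rule computable_pred_cong[OF all_steps]) (simp add: step_iff cong: conj_cong)
qed

lemma inj_form_dec: "inj form_dec"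
  by (metis form_enc_form_dec injI)

lemma mem_forms_of_code:
  "form_dec x \<in> set (forms_of_code W) \<longleftrightarrow> (\<exists>k<length (list_decode W). pfst (code_nth W k) = x)"
proof -
  have "form_dec x \<in> set (forms_of_code W) \<longleftrightarrow> x \<in> pfst ` set (list_decode W)"
    by (auto simp: forms_of_code_def image_iff inj_eq[OF inj_form_dec])
  also have "\<dots> \<longleftrightarrow> (\<exists>k<length (list_decode W). pfst (list_decode W ! k) = x)"
    by (auto simp: image_iff in_set_conv_nth) (use nth_mem in blast)
  finally show ?thesis
    by (auto simp: code_nth_list_decode)
qed

theorem semidecidable_Thm: "semidecidable (form_enc ` Thm ar C)"
  unfolding semidecidable_def
proof (intro exI conjI allI)
  show "computable_pred (\<lambda>z. derivation_code ar C (psnd z) \<and>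
      (\<exists>k<length (list_decode (psnd z)). pfst (code_nth (psnd z) k) = pfst z))"
    by (intro computable_pred_conj computable_pred_ex_less computable_pred_eq
        computable_pred_comp[OF computable_pred_derivation_code] computable1_length_list_decode
        computable1_code_nth computable1_pfst computable1_psnd computable1_id)
  fix x
  have "x \<in> form_enc ` Thm ar C \<longleftrightarrow> (\<exists>ds. derivation ar C ds \<and> form_dec x \<in> set ds)"
    by (simp add: mem_image_form_enc Thm_def)
  also have "\<dots> \<longleftrightarrow> (\<exists>W. derivation_code ar C W \<and> form_dec x \<in> set (forms_of_code W))"
  proof
    assume "\<exists>ds. derivation ar C ds \<and> form_dec x \<in> set ds"
    then obtain ds where "derivation ar C ds" "form_dec x \<in> set ds"
      by blast
    with derivation_code_of_derivation show "\<exists>W. derivation_code ar C W \<and> form_dec x \<in> set (forms_of_code W)"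
      by metis
  qed (use derivation_forms_of_code in blast)
  also have "\<dots> \<longleftrightarrow> (\<exists>W. derivation_code ar C W \<and> (\<exists>k<length (list_decode W). pfst (code_nth W k) = x))"
    by (simp add: mem_forms_of_code)
  finally show "x \<in> form_enc ` Thm ar C \<longleftrightarrow>
      (\<exists>W. derivation_code ar C W \<and> (\<exists>k<length (list_decode W). pfst (code_nth W k) = x))" .
qed

section \<open>The non-tautologies of an effective sequence of logics form a semidecidable set\<close>

lemma eval_cong: "\<forall>n\<in>vars F. v n = w n \<Longrightarrow> eval N v F = eval N w F"
  by (induction F) (auto intro!: arg_cong[where f = "tf N _"])

lemma eval_less_nv:
  assumes "is_logic ar N" "valuation N v"
  shows "wf_form ar F \<Longrightarrow> eval N v F < nv N"
proof (induction F)
  case (App c args)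
  then have "set (map (eval N v) args) \<subseteq> {..<nv N}"
    by auto
  with App.prems show ?case
    using assms(1) unfolding is_logic_def by auto
qed (use assms(2) in \<open>simp add: valuation_def\<close>)

definition code_valuation :: "matrix \<Rightarrow> nat \<Rightarrow> nat \<Rightarrow> nat" where
  "code_valuation N V n =
    (if n < length (list_decode V) \<and> code_nth V n < nv N then code_nth V n else 0)"

lemma valuation_code_valuation: "is_logic ar N \<Longrightarrow> valuation N (code_valuation N V)"
  unfolding is_logic_def valuation_def code_valuation_def by auto

lemma not_Taut_iff_code_valuation:
  assumes "is_logic ar N" "wf_form ar F"
  shows "F \<notin> Taut ar N \<longleftrightarrow> (\<exists>V. eval N (code_valuation N V) F \<notin> des N)"
proof
  assume "F \<notin> Taut ar N"
  then obtain v where v: "valuation N v" "eval N v F \<notin> des N"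
    using assms(2) unfolding Taut_def satisfies_def by blast
  obtain m where m: "\<And>n. n \<in> vars F \<Longrightarrow> n < m"
    using finite_vars[of F] finite_nat_set_iff_bounded by auto
  have "eval N (code_valuation N (list_encode (map v [0..<m]))) F = eval N v F"
    using m v(1) by (intro eval_cong) (simp add: code_valuation_def code_nth_list_encode valuation_def)
  with v(2) show "\<exists>V. eval N (code_valuation N V) F \<notin> des N"
    by (intro exI[of _ "list_encode (map v [0..<m])"]) simp
next
  assume "\<exists>V. eval N (code_valuation N V) F \<notin> des N"
  then show "F \<notin> Taut ar N"
    using valuation_code_valuation[OF assms(1)] unfolding Taut_def satisfies_def by blast
qed

definition tf_domain :: "nat list \<Rightarrow> matrix \<Rightarrow> nat \<Rightarrow> nat \<Rightarrow> bool" where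
  "tf_domain ar N c L \<longleftrightarrow>
    c < length ar \<and> length (list_decode L) = ar ! c \<and> set (list_decode L) \<subseteq> {..<nv N}"

definition tf_total :: "nat list \<Rightarrow> matrix \<Rightarrow> nat \<Rightarrow> nat \<Rightarrow> nat" where
  "tf_total ar N c L = (if tf_domain ar N c L then tf N c (list_decode L) else 0)"

lemma fold_form_tf_total:
  assumes "is_logic ar N" "valuation N v"
  shows "wf_form ar F \<Longrightarrow> fold_form v (tf_total ar N) F = eval N v F"
proof (induction F)
  case (App c args)
  then have "map (fold_form v (tf_total ar N)) args = map (eval N v) args"
    by simp
  moreover have "set (map (eval N v) args) \<subseteq> {..<nv N}"
    using eval_less_nv[OF assms] App.prems by auto
  ultimately show ?case
    using App.prems by (simp only: fold_form.simps) (simp add: tf_total_def tf_domain_def)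
qed simp

lemma computable1_comp_partial:
  assumes r: "\<And>xs. length xs = length gs \<Longrightarrow> D xs \<Longrightarrow> rec_eval r xs (F xs)"
    and gs: "\<forall>g\<in>set gs. computable1 g" and D: "\<And>x. D (map (\<lambda>g. g x) gs)"
  shows "computable1 (\<lambda>x. F (map (\<lambda>g. g x) gs))"
proof -
  obtain R where R: "\<forall>g\<in>set gs. \<forall>x. rec_eval (R g) [x] (g x)"
    using gs unfolding computable1_def by metis
  have "rec_eval (Cn r (map R gs)) [x] (F (map (\<lambda>g. g x) gs))" for x
    by (rule rec_eval.comp[where ys = "map (\<lambda>g. g x) gs"]) (use R r D in auto)
  then show ?thesis
    unfolding computable1_def by blast
qed

lemma computable1_nv: "effective_seq ar M \<Longrightarrow> computable1 (\<lambda>j. nv (M j))"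
  unfolding effective_seq_def computable1_def by blast

lemma computable_pred_tf_domain:
  assumes "effective_seq ar M"
  shows "computable_pred (\<lambda>z. tf_domain ar (M (pfst z)) (pfst (psnd z)) (psnd (psnd z)))"
proof -
  have all_less: "(\<forall>i<length (list_decode L). code_nth L i < k) \<longleftrightarrow> set (list_decode L) \<subseteq> {..<k}"
    for L k
    by (auto simp: code_nth_list_decode in_set_conv_nth subset_iff)
  have "computable_pred (\<lambda>z. pfst (psnd z) < length ar \<and>
      length (list_decode (psnd (psnd z))) = code_nth (list_encode ar) (pfst (psnd z)) \<and>
      (\<forall>i<length (list_decode (psnd (psnd z))). code_nth (psnd (psnd z)) i < nv (M (pfst z))))"
    by (intro computable_pred_conj computable_pred_less computable_pred_eq computable_pred_all_less
        computable1_length_list_decode computable1_code_nth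
        computable1_comp[OF computable1_nv[OF assms]]
        computable1_pfst computable1_psnd computable1_id computable1_const)
  then show ?thesis
    by (rule computable_pred_cong) (auto simp: tf_domain_def all_less code_nth_list_encode)
qed

lemma computable1_tf_total:
  assumes M: "effective_seq ar M" and logics: "\<And>j. is_logic ar (M j)"
  shows "computable1 (\<lambda>z. tf_total ar (M (pfst z)) (pfst (psnd z)) (psnd (psnd z)))"
proof (cases "ar = []")
  case True
  then show ?thesis
    by (simp add: tf_total_def tf_domain_def computable1_const)
next
  case False
  obtain r where r: "\<And>i c xs. c < length ar \<Longrightarrow> length xs = ar ! c \<Longrightarrow> set xs \<subseteq> {..<nv (M i)} \<Longrightarrow>
      rec_eval r [i, c, list_encode xs] (tf (M i) c xs)"
    using M unfolding effective_seq_def by blast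
  let ?dom = "\<lambda>z. tf_domain ar (M (pfst z)) (pfst (psnd z)) (psnd (psnd z))"
  note dom = computable_pred_tf_domain[OF M]
  \<comment> \<open>Outside the domain, \<open>r\<close> is run on a dummy argument inside the domain, so that it terminates.\<close>
  define c' where "c' z = (if ?dom z then pfst (psnd z) else 0)" for z
  define L' where "L' z = (if ?dom z then psnd (psnd z) else list_encode (replicate (ar ! 0) 0))" for z
  have "computable1 (\<lambda>z. (\<lambda>xs. tf (M (xs ! 0)) (xs ! 1) (list_decode (xs ! 2))) (map (\<lambda>g. g z) [pfst, c', L']))"
  proof (rule computable1_comp_partial[where D = "\<lambda>xs. tf_domain ar (M (xs ! 0)) (xs ! 1) (xs ! 2)"])
    show "rec_eval r xs (tf (M (xs ! 0)) (xs ! 1) (list_decode (xs ! 2)))"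
      if "length xs = length [pfst, c', L']" and "tf_domain ar (M (xs ! 0)) (xs ! 1) (xs ! 2)" for xs
      using that r[of "xs ! 1" "list_decode (xs ! 2)" "xs ! 0"]
      by (auto simp: tf_domain_def length_Suc_conv numeral_2_eq_2)
    show "\<forall>g\<in>set [pfst, c', L']. computable1 g"
      unfolding c'_def L'_def
      by (auto intro!: computable1_If dom computable1_pfst computable1_psnd computable1_id
          computable1_const)
    show "tf_domain ar (M (map (\<lambda>g. g z) [pfst, c', L'] ! 0)) (map (\<lambda>g. g z) [pfst, c', L'] ! 1)
      (map (\<lambda>g. g z) [pfst, c', L'] ! 2)" for z
      using False logics[of "pfst z"]
      by (auto simp: c'_def L'_def tf_domain_def is_logic_def numeral_2_eq_2)
  qed
  then have "computable1 (\<lambda>z. if ?dom z then tf (M (pfst z)) (c' z) (list_decode (L' z)) else 0)"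
    by (intro computable1_If dom computable1_const) (simp add: numeral_2_eq_2)
  then show ?thesis
    by (rule back_subst[of computable1]) (simp add: fun_eq_iff tf_total_def c'_def L'_def)
qed

lemma computable_pred_designated:
  assumes M: "effective_seq ar M" and logics: "\<And>j. is_logic ar (M j)"
  shows "computable_pred (\<lambda>z. psnd z < nv (M (pfst z)) \<and> psnd z \<in> des (M (pfst z)))"
proof -
  obtain r where r: "\<And>i x. x < nv (M i) \<Longrightarrow> rec_eval r [i, x] (if x \<in> des (M i) then 1 else 0)"
    using M unfolding effective_seq_def by blast
  define y' where "y' z = (if psnd z < nv (M (pfst z)) then psnd z else 0)" for z
  have less: "computable_pred (\<lambda>z. psnd z < nv (M (pfst z)))"
    by (intro computable_pred_less computable1_psnd computable1_comp[OF computable1_nv[OF M]]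
        computable1_pfst computable1_id)
  have "computable1 (\<lambda>z. (\<lambda>xs. if xs ! 1 \<in> des (M (xs ! 0)) then 1 else 0) (map (\<lambda>g. g z) [pfst, y']))"
  proof (rule computable1_comp_partial[where D = "\<lambda>xs. xs ! 1 < nv (M (xs ! 0))"])
    show "rec_eval r xs (if xs ! 1 \<in> des (M (xs ! 0)) then 1 else 0)"
      if "length xs = length [pfst, y']" "xs ! 1 < nv (M (xs ! 0))" for xs
      using that r[of "xs ! 1" "xs ! 0"] by (auto simp: length_Suc_conv)
    show "\<forall>g\<in>set [pfst, y']. computable1 g"
      unfolding y'_def
      by (auto intro!: computable1_If less computable1_pfst computable1_psnd computable1_id
          computable1_const)
    show "map (\<lambda>g. g z) [pfst, y'] ! 1 < nv (M (map (\<lambda>g. g z) [pfst, y'] ! 0))" for z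
      using logics[of "pfst z"] by (simp add: y'_def is_logic_def)
  qed
  then have "computable_pred (\<lambda>z. y' z \<in> des (M (pfst z)))"
    unfolding computable_pred_def by simp
  then show ?thesis
    by (rule computable_pred_conj[OF less, THEN computable_pred_cong]) (auto simp: y'_def)
qed

text \<open>A refutation \<open>w\<close> of the formula coded by \<open>x\<close> codes an index \<open>j\<close> and the truth values
  of \<open>M j\<close> assigned to \<open>X\<^sub>0, X\<^sub>1, \<dots>\<close>; a formula that is not well-formed is refuted by every \<open>w\<close>.\<close>

definition refutes :: "nat list \<Rightarrow> (nat \<Rightarrow> matrix) \<Rightarrow> nat \<Rightarrow> nat \<Rightarrow> bool" where
  "refutes ar M x w \<longleftrightarrow> \<not> wf_form ar (form_dec x) \<or>
    eval (M (pfst w)) (code_valuation (M (pfst w)) (psnd w)) (form_dec x) \<notin> des (M (pfst w))"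

lemma not_mem_Inter_Taut_iff_refutes:
  assumes logics: "\<And>j. is_logic ar (M j)"
  shows "x \<notin> form_enc ` (\<Inter>j. Taut ar (M j)) \<longleftrightarrow> (\<exists>w. refutes ar M x w)"
proof (cases "wf_form ar (form_dec x)")
  case True
  have "x \<notin> form_enc ` (\<Inter>j. Taut ar (M j)) \<longleftrightarrow> (\<exists>j. form_dec x \<notin> Taut ar (M j))"
    by (simp add: mem_image_form_enc)
  also have "\<dots> \<longleftrightarrow> (\<exists>j V. refutes ar M x (prod_encode (j, V)))"
    using True by (simp add: not_Taut_iff_code_valuation[OF logics True] refutes_def)
  also have "\<dots> \<longleftrightarrow> (\<exists>w. refutes ar M x w)"
    by (metis prod_encode_pfst_psnd)
  finally show ?thesis .
next
  case False
  then show ?thesis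
    by (simp add: mem_image_form_enc refutes_def Taut_def)
qed

lemma computable_pred_refutes:
  assumes M: "effective_seq ar M" and logics: "\<And>j. is_logic ar (M j)"
  shows "computable_pred (\<lambda>z. refutes ar M (pfst z) (psnd z))"
proof -
  define val where "val z = fold_form (code_valuation (M (pfst (psnd z))) (psnd (psnd z)))
    (tf_total ar (M (pfst (psnd z)))) (form_dec (pfst z))" for z
  have "computable1 val"
    unfolding val_def code_valuation_def
    by (intro computable1_fold_form computable1_If computable_pred_conj computable_pred_less
        computable1_length_list_decode computable1_code_nth computable1_comp[OF computable1_nv[OF M]]
        computable1_triple_arg[OF computable1_tf_total[OF M logics]]
        computable1_pfst computable1_psnd computable1_id computable1_const)
  then have "computable_pred (\<lambda>z. val z < nv (M (pfst (psnd z))) \<and> val z \<in> des (M (pfst (psnd z))))"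
    using computable_pred_comp[OF computable_pred_designated[OF M logics]
        computable1_prod_encode[OF computable1_pfst[OF computable1_psnd[OF computable1_id]]]]
    by simp
  then have comp: "computable_pred (\<lambda>z. \<not> wf_form ar (form_dec (pfst z)) \<or>
      \<not> (val z < nv (M (pfst (psnd z))) \<and> val z \<in> des (M (pfst (psnd z)))))"
    by (intro computable_pred_disj computable_pred_not computable_pred_wf_form computable1_pfst
        computable1_id)
  have val_eval: "val z = eval (M (pfst (psnd z))) (code_valuation (M (pfst (psnd z))) (psnd (psnd z)))
      (form_dec (pfst z))" if "wf_form ar (form_dec (pfst z))" for z
    using fold_form_tf_total[OF logics valuation_code_valuation[OF logics] that] by (simp add: val_def)
  show ?thesis
    by (rule computable_pred_cong[OF comp])
      (auto simp: refutes_def val_eval eval_less_nv[OF logics valuation_code_valuation[OF logics]])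
qed

theorem semidecidable_Compl_Taut:
  assumes "effective_seq ar M" and "\<And>j. is_logic ar (M j)"
  shows "semidecidable (- form_enc ` (\<Inter>j. Taut ar (M j)))"
  unfolding semidecidable_def
  using computable_pred_refutes[OF assms] not_mem_Inter_Taut_iff_refutes[OF assms(2)] by auto

theorem corollary3:
  fixes ar :: "nat list" and C :: calc
  assumes "calculus ar C"
    and "\<not> decidable (form_enc ` Thm ar C)"
  shows "\<not> effectively_approximable ar C"
proof
  assume "effectively_approximable ar C"
  then obtain M where M: "effective_seq ar M" and covers: "\<And>j. cover ar C (M j)"
    and Thm_eq: "Thm ar C = (\<Inter>j. Taut ar (M j))"
    unfolding effectively_approximable_def by blast
  have "\<And>j. is_logic ar (M j)"
    using covers unfolding cover_def by blast
  then have "semidecidable (- form_enc ` Thm ar C)"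
    unfolding Thm_eq by (rule semidecidable_Compl_Taut[OF M])
  with semidecidable_Thm have "decidable (form_enc ` Thm ar C)"
    by (rule decidable_if_semidecidable_Compl)
  with assms(2) show False ..
qed

end
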